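(* Let $\alpha\in\mathbb{R}$ be transcendental over $\mathbb{Q}$ and let $\mathbb{Q}(\alpha)^+=H_1\sqcup\cdots\sqcup H_k$ ($k$ finite) be a partition into pairwise disjoint nonempty subsets, each closed under addition and multiplication. Consider the set $L$ of elements $a\alpha+b>0$ with $a,b\in\mathbb{Q}$, $a\neq 0$. Then $L$ meets at most two of the sets $H_i$; and if it meets two of them, then two elements $a\alpha+b$ and $a'\alpha+b'$ of $L$ lie in the same $H_i$ if and only if $a$ and $a'$ have the same sign. *)

theory Defs
  imports "HOL-Analysis.Analysis" "HOL-Computational_Algebra.Polynomial"
begin

definition Qadj :: "real \<Rightarrow> real set" where
  "Qadj \<alpha> = {poly p \<alpha> / poly q \<alpha> | p q.
      (\<forall>i. coeff p i \<in> \<rat>) \<and> (\<forall>i. coeff q i \<in> \<rat>) \<and> poly q \<alpha> \<noteq> 0}"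

end

theory Submission
  imports Defs
begin

text \<open>The parts H i are closed under addition and multiplication, hence (since the positive
  part of Q(\<alpha>) is closed under positive rational scaling) under multiplication by positive
  rationals. Fix \<beta> = \<alpha> or \<beta> = -\<alpha> and look at the shifts \<beta> - s (s rational, s < \<beta>),
  which are positive elements of Q(\<alpha>). If two shifts \<beta> - p and \<beta> - p' with p < p' lie in
  the same part, the identity l (\<beta> - p) + (\<beta> - p')^2 = l' (\<beta> - q) + (\<beta> - q)^2 with
  rational l > 0, l' \<ge> 0 puts \<beta> - q into that part as well whenever 2p - p' \<le> q < p;
  iterating, so does every shift below p. By pigeonhole among k + 1 shifts above any given s
  such a pair exists, hence all shifts of \<beta> lie in a single part. Every element a\<alpha> + b of L is
  a positive rational multiple of a shift of \<alpha> (if a > 0) or of -\<alpha> (if a < 0), which gives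
  at most two parts, told apart by the sign of a.\<close>

lemma linear_in_Qadj:
  assumes "a \<in> \<rat>" "b \<in> \<rat>"
  shows "a * \<alpha> + b \<in> Qadj \<alpha>"
proof -
  have "\<forall>i. coeff [:b, a:] i \<in> \<rat>"
    using assms by (auto simp: coeff_pCons split: nat.split)
  moreover have "\<forall>i. coeff (1::real poly) i \<in> \<rat>"
    by (auto simp: coeff_1)
  moreover have "a * \<alpha> + b = poly [:b, a:] \<alpha> / poly 1 \<alpha>"
    by (simp add: algebra_simps)
  ultimately show ?thesis
    unfolding Qadj_def by fastforce
qed

lemma Rats_mult_in_Qadj:
  assumes "x \<in> Qadj \<alpha>" "c \<in> \<rat>"
  shows "c * x \<in> Qadj \<alpha>"
proof -
  obtain p q where "x = poly p \<alpha> / poly q \<alpha>" "\<forall>i. coeff p i \<in> \<rat>" "\<forall>i. coeff q i \<in> \<rat>"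
      "poly q \<alpha> \<noteq> 0"
    using assms(1) unfolding Qadj_def by blast
  then show ?thesis
    unfolding Qadj_def using assms(2) by (intro CollectI exI[of _ "smult c p"] exI[of _ q]) auto
qed

lemma quadratic_shift_identity:
  fixes \<beta> p p' q :: "'a :: field"
  assumes "p \<noteq> q"
  shows "(p' - q)\<^sup>2 / (p - q) * (\<beta> - p) + (\<beta> - p')\<^sup>2
    = (p' - q) * (p' + q - 2 * p) / (p - q) * (\<beta> - q) + (\<beta> - q)\<^sup>2"
  using assms by (simp add: field_simps power2_eq_square)

locale semiring_partition =
  fixes H :: "nat \<Rightarrow> real set" and k :: nat and P :: "real set"
  assumes disjoint: "\<And>i j. i < k \<Longrightarrow> j < k \<Longrightarrow> i \<noteq> j \<Longrightarrow> H i \<inter> H j = {}"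
    and cover: "(\<Union>i<k. H i) = P"
    and add_closed: "\<And>i x y. i < k \<Longrightarrow> x \<in> H i \<Longrightarrow> y \<in> H i \<Longrightarrow> x + y \<in> H i"
    and mult_closed: "\<And>i x y. i < k \<Longrightarrow> x \<in> H i \<Longrightarrow> y \<in> H i \<Longrightarrow> x * y \<in> H i"
    and Rats_mult_closed: "\<And>x c. x \<in> P \<Longrightarrow> c \<in> \<rat> \<Longrightarrow> c > 0 \<Longrightarrow> c * x \<in> P"
begin

lemma part_unique: "i < k \<Longrightarrow> j < k \<Longrightarrow> x \<in> H i \<Longrightarrow> x \<in> H j \<Longrightarrow> i = j"
  using disjoint by blast

lemma ex_part: "x \<in> P \<Longrightarrow> \<exists>i<k. x \<in> H i"
  using cover by blast

lemma same_part_iff: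
  assumes "i < k" "j < k" "x \<in> H i" "y \<in> H j"
  shows "(\<exists>l<k. x \<in> H l \<and> y \<in> H l) \<longleftrightarrow> i = j"
  using part_unique[OF assms(1) _ assms(3)] part_unique[OF assms(2) _ assms(4)] assms by blast

lemma parts_meeting_subset:
  assumes "C \<subseteq> {..<k}" "\<And>x. x \<in> X \<Longrightarrow> \<exists>i\<in>C. x \<in> H i"
  shows "{i. i < k \<and> H i \<inter> X \<noteq> {}} \<subseteq> C"
proof
  fix i assume "i \<in> {i. i < k \<and> H i \<inter> X \<noteq> {}}"
  then obtain x where "i < k" "x \<in> H i" "x \<in> X"
    by blast
  moreover obtain j where "j \<in> C" "x \<in> H j"
    using assms(2) \<open>x \<in> X\<close> by blast
  ultimately show "i \<in> C"
    using part_unique[of i j x] assms(1) by blast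
qed

lemma of_nat_mult_in_part:
  assumes "i < k" "x \<in> H i" "n > 0"
  shows "of_nat n * x \<in> H i"
  using assms(3)
proof (induction n rule: nat_induct_non_zero)
  case 1
  then show ?case using assms(2) by simp
next
  case (Suc n)
  then have "of_nat n * x + x \<in> H i"
    using add_closed assms(1,2) by blast
  then show ?case by (simp add: algebra_simps)
qed

lemma Rats_mult_in_part:
  assumes i: "i < k" "x \<in> H i" and c: "c \<in> \<rat>" "c > 0"
  shows "c * x \<in> H i"
proof -
  obtain a b :: int where ab: "b > 0" "c = of_int a / of_int b"
    using c(1) by (auto elim: Rats_cases')
  with c(2) have "a > 0" by (simp add: zero_less_divide_iff)
  have "x / of_int b \<in> P"
    using Rats_mult_closed[of x "1 / of_int b"] i cover ab(1) by auto
  then obtain j where j: "j < k" "x / of_int b \<in> H j"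
    using ex_part by blast
  have "of_nat (nat b) * (x / of_int b) \<in> H j"
    by (rule of_nat_mult_in_part[OF j]) (use ab(1) in simp)
  moreover have "of_nat (nat b) * (x / of_int b) = x"
    using ab(1) by simp
  ultimately have "j = i"
    using part_unique[OF j(1) i(1)] i(2) ab(1) by simp
  have "of_nat (nat a) * (x / of_int b) \<in> H i"
    using of_nat_mult_in_part[of i "x / of_int b" "nat a"] j(2) \<open>j = i\<close> \<open>a > 0\<close> i(1) by simp
  then show ?thesis
    using ab \<open>a > 0\<close> by simp
qed

context
  fixes \<beta> :: real
  assumes shift_in_P: "\<And>s. s \<in> \<rat> \<Longrightarrow> s < \<beta> \<Longrightarrow> \<beta> - s \<in> P"
begin

lemma shift_in_part_step:
  assumes rats: "p \<in> \<rat>" "p' \<in> \<rat>" "q \<in> \<rat>"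
    and order: "p < p'" "p' < \<beta>" "2 * p - p' \<le> q" "q < p"
    and J: "J < k" "\<beta> - p \<in> H J" "\<beta> - p' \<in> H J"
  shows "\<beta> - q \<in> H J"
proof -
  have "\<beta> - q \<in> P"
    using shift_in_P rats(3) order by simp
  then obtain M where M: "M < k" "\<beta> - q \<in> H M"
    using ex_part by blast
  define l where "l = (p' - q)\<^sup>2 / (p - q)"
  define l' where "l' = (p' - q) * (p' + q - 2 * p) / (p - q)"
  have l: "l \<in> \<rat>" "l > 0"
    using rats order by (simp_all add: l_def)
  have l': "l' \<in> \<rat>" "l' \<ge> 0"
    using rats order by (simp_all add: l'_def)
  have "l * (\<beta> - p) + (\<beta> - p')\<^sup>2 \<in> H J"
    unfolding power2_eq_square
    by (rule add_closed[OF J(1) Rats_mult_in_part[OF J(1,2) l] mult_closed[OF J(1) J(3) J(3)]])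
  moreover have "l' * (\<beta> - q) + (\<beta> - q)\<^sup>2 \<in> H M"
  proof (cases "l' = 0")
    case True
    then show ?thesis
      unfolding power2_eq_square using mult_closed[OF M(1) M(2) M(2)] by simp
  next
    case False
    with l' have "l' > 0" by simp
    then show ?thesis
      unfolding power2_eq_square
      by (rule add_closed[OF M(1) Rats_mult_in_part[OF M l'(1)] mult_closed[OF M(1) M(2) M(2)]])
  qed
  moreover have "l * (\<beta> - p) + (\<beta> - p')\<^sup>2 = l' * (\<beta> - q) + (\<beta> - q)\<^sup>2"
    unfolding l_def l'_def by (rule quadratic_shift_identity) (use order in simp)
  ultimately have "J = M"
    using part_unique[OF J(1) M(1)] by simp
  with M show ?thesis by simp
qed

lemma shift_in_part_below:
  assumes rats: "p \<in> \<rat>" "p' \<in> \<rat>" and order: "p < p'" "p' < \<beta>"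
    and J: "J < k" "\<beta> - p \<in> H J" "\<beta> - p' \<in> H J"
    and q: "q \<in> \<rat>" "q \<le> p"
  shows "\<beta> - q \<in> H J"
proof -
  define d where "d = p' - p"
  have d: "d > 0" "d \<in> \<rat>"
    using order rats by (auto simp: d_def)
  have "\<forall>q\<in>\<rat>. p - of_nat n * d \<le> q \<longrightarrow> q \<le> p \<longrightarrow> \<beta> - q \<in> H J" for n
  proof (induction n)
    case 0
    then show ?case using J by auto
  next
    case (Suc n)
    define r where "r = p - of_nat n * d"
    have "of_nat n * d \<ge> 0"
      using d by simp
    then have r: "r \<in> \<rat>" "r \<le> p" "\<beta> - r \<in> H J"
      using Suc d rats by (auto simp: r_def)
    show ?case
    proof (intro ballI impI)
      fix q assume q: "q \<in> \<rat>" "p - of_nat (Suc n) * d \<le> q" "q \<le> p"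
      show "\<beta> - q \<in> H J"
      proof (cases "r \<le> q")
        case True
        then show ?thesis using Suc q by (simp add: r_def)
      next
        case False
        have "2 * r - p' \<le> p - of_nat (Suc n) * d"
          using \<open>of_nat n * d \<ge> 0\<close> unfolding r_def d_def by (simp add: algebra_simps)
        with False q r order show ?thesis
          by (intro shift_in_part_step[OF r(1) rats(2) q(1) _ order(2) _ _ J(1) r(3) J(3)]) auto
      qed
    qed
  qed
  moreover obtain n :: nat where "(p - q) / d \<le> n"
    using real_arch_simple by blast
  then have "p - of_nat n * d \<le> q"
    using d by (simp add: field_simps)
  ultimately show ?thesis
    using q by blast
qed

lemma ex_part_containing_shifts_below:
  assumes s: "s \<in> \<rat>" "s < \<beta>"
  obtains c where "c < k" "\<And>q. q \<in> \<rat> \<Longrightarrow> q \<le> s \<Longrightarrow> \<beta> - q \<in> H c"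
proof -
  obtain r where r: "r \<in> \<rat>" "s < r" "r < \<beta>"
    using Rats_dense_in_real s by blast
  define y where "y i = s + (r - s) * of_nat i / of_nat (Suc k)" for i :: nat
  have y_Rats: "y i \<in> \<rat>" for i
    unfolding y_def using r s by auto
  have y_ge: "s \<le> y i" for i
    unfolding y_def using r by auto
  have y_less: "y i < \<beta>" if "i \<le> k" for i
  proof -
    have "(r - s) * of_nat i / of_nat (Suc k) \<le> r - s"
      using r that by (simp add: divide_le_eq mult_left_mono)
    then show ?thesis unfolding y_def using r by simp
  qed
  have y_mono: "y i < y j" if "i < j" for i j
    unfolding y_def using r that by (simp add: divide_strict_right_mono)
  have "\<exists>c<k. \<beta> - y i \<in> H c" if "i \<le> k" for i
    using ex_part shift_in_P y_Rats y_less that by blast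
  then obtain g where g: "\<And>i. i \<le> k \<Longrightarrow> g i < k \<and> \<beta> - y i \<in> H (g i)"
    by metis
  have "card (g ` {..k}) \<le> card {..<k}"
    using g by (intro card_mono) auto
  then have "\<not> inj_on g {..k}"
    by (intro pigeonhole) simp
  then obtain i j where "i \<le> k" "j \<le> k" "i \<noteq> j" "g i = g j"
    unfolding inj_on_def by auto
  then obtain i j where ij: "i < j" "j \<le> k" "g i = g j"
    by (metis linorder_neqE_nat)
  have below: "\<beta> - q \<in> H (g i)" if "q \<in> \<rat>" "q \<le> s" for q
  proof (rule shift_in_part_below)
    show "\<beta> - y i \<in> H (g i)" "g i < k"
      using g[of i] ij by simp_all
    show "\<beta> - y j \<in> H (g i)"
      using g[of j] ij by simp
    show "q \<le> y i"
      using that y_ge order.trans by blast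
  qed (use y_Rats y_mono y_less ij that in auto)
  show ?thesis
    using that[OF _ below] g[of i] ij by simp
qed

lemma ex_part_containing_all_shifts:
  obtains c where "c < k" "\<And>s. s \<in> \<rat> \<Longrightarrow> s < \<beta> \<Longrightarrow> \<beta> - s \<in> H c"
proof -
  define s\<^sub>0 :: real where "s\<^sub>0 = of_int (\<lfloor>\<beta>\<rfloor> - 1)"
  have s\<^sub>0: "s\<^sub>0 \<in> \<rat>" "s\<^sub>0 < \<beta>"
    unfolding s\<^sub>0_def by (auto, linarith)
  obtain c where c: "c < k" "\<beta> - s\<^sub>0 \<in> H c"
    using ex_part_containing_shifts_below[OF s\<^sub>0] s\<^sub>0(1) by blast
  have "\<beta> - s \<in> H c" if s: "s \<in> \<rat>" "s < \<beta>" for s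
  proof -
    have "max s s\<^sub>0 \<in> \<rat>" "max s s\<^sub>0 < \<beta>"
      using s s\<^sub>0 by (auto simp: max_def)
    then obtain c' where "c' < k" "\<And>q. q \<in> \<rat> \<Longrightarrow> q \<le> max s s\<^sub>0 \<Longrightarrow> \<beta> - q \<in> H c'"
      using ex_part_containing_shifts_below by blast
    moreover from this have "c' = c"
      using part_unique c s\<^sub>0(1) by force
    ultimately show ?thesis using s by simp
  qed
  then show ?thesis using that c(1) by blast
qed

lemma ex_part_containing_positive_linear:
  obtains c where "c < k"
    "\<And>a b. a \<in> \<rat> \<Longrightarrow> b \<in> \<rat> \<Longrightarrow> a > 0 \<Longrightarrow> a * \<beta> + b > 0 \<Longrightarrow> a * \<beta> + b \<in> H c"
proof -
  obtain c where c: "c < k" "\<And>s. s \<in> \<rat> \<Longrightarrow> s < \<beta> \<Longrightarrow> \<beta> - s \<in> H c"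
    using ex_part_containing_all_shifts by blast
  have "a * \<beta> + b \<in> H c" if "a \<in> \<rat>" "b \<in> \<rat>" "a > 0" "a * \<beta> + b > 0" for a b
  proof -
    define s where "s = - b / a"
    have "s \<in> \<rat>"
      using that by (simp add: s_def)
    moreover have "- b < \<beta> * a"
      using that by (simp add: algebra_simps)
    then have "s < \<beta>"
      unfolding s_def by (simp only: pos_divide_less_eq[OF that(3)])
    ultimately have "a * (\<beta> - s) \<in> H c"
      using c Rats_mult_in_part that(1,3) by blast
    moreover have "a * (\<beta> - s) = a * \<beta> + b"
      using that(3) by (simp add: s_def field_simps)
    ultimately show ?thesis by simp
  qed
  then show ?thesis using that c(1) by blast
qed

end

lemma linear_in_sign_parts:
  fixes \<alpha> :: real
  assumes linear_in_P: "\<And>a b. a \<in> \<rat> \<Longrightarrow> b \<in> \<rat> \<Longrightarrow> a * \<alpha> + b > 0 \<Longrightarrow> a * \<alpha> + b \<in> P"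
  obtains c\<^sub>p c\<^sub>n where "c\<^sub>p < k" "c\<^sub>n < k"
    "\<And>a b. a \<in> \<rat> \<Longrightarrow> b \<in> \<rat> \<Longrightarrow> a \<noteq> 0 \<Longrightarrow> a * \<alpha> + b > 0 \<Longrightarrow>
      a * \<alpha> + b \<in> H (if a > 0 then c\<^sub>p else c\<^sub>n)"
proof -
  have "\<alpha> - s \<in> P" if "s \<in> \<rat>" "s < \<alpha>" for s
    using linear_in_P[of 1 "- s"] that by simp
  then obtain c\<^sub>p where c\<^sub>p: "c\<^sub>p < k"
    "\<And>a b. a \<in> \<rat> \<Longrightarrow> b \<in> \<rat> \<Longrightarrow> a > 0 \<Longrightarrow> a * \<alpha> + b > 0 \<Longrightarrow> a * \<alpha> + b \<in> H c\<^sub>p"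
    using ex_part_containing_positive_linear by blast
  have "- \<alpha> - s \<in> P" if "s \<in> \<rat>" "s < - \<alpha>" for s
    using linear_in_P[of "- 1" "- s"] that by simp
  then obtain c\<^sub>n where c\<^sub>n: "c\<^sub>n < k"
    "\<And>a b. a \<in> \<rat> \<Longrightarrow> b \<in> \<rat> \<Longrightarrow> a > 0 \<Longrightarrow> a * - \<alpha> + b > 0 \<Longrightarrow> a * - \<alpha> + b \<in> H c\<^sub>n"
    using ex_part_containing_positive_linear by blast
  have "a * \<alpha> + b \<in> H (if a > 0 then c\<^sub>p else c\<^sub>n)"
    if "a \<in> \<rat>" "b \<in> \<rat>" "a \<noteq> 0" "a * \<alpha> + b > 0" for a b
  proof (cases "a > 0")
    case True
    then show ?thesis using c\<^sub>p(2) that by simp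
  next
    case False
    then show ?thesis using c\<^sub>n(2)[of "- a" b] that by simp
  qed
  with c\<^sub>p(1) c\<^sub>n(1) show ?thesis
    using that by blast
qed

lemma parts_meeting_linear:
  fixes \<alpha> :: real
  assumes linear_in_P: "\<And>a b. a \<in> \<rat> \<Longrightarrow> b \<in> \<rat> \<Longrightarrow> a * \<alpha> + b > 0 \<Longrightarrow> a * \<alpha> + b \<in> P"
  obtains c\<^sub>p c\<^sub>n where
    "{i. i < k \<and> H i \<inter> {x. \<exists>a b. a \<in> \<rat> \<and> b \<in> \<rat> \<and> a \<noteq> 0 \<and> x = a * \<alpha> + b \<and> x > 0} \<noteq> {}}
      \<subseteq> {c\<^sub>p, c\<^sub>n}"
    "\<And>a b a' b'. c\<^sub>p \<noteq> c\<^sub>n \<Longrightarrow> a \<in> \<rat> \<Longrightarrow> b \<in> \<rat> \<Longrightarrow> a' \<in> \<rat> \<Longrightarrow> b' \<in> \<rat> \<Longrightarrow>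
      a \<noteq> 0 \<Longrightarrow> a' \<noteq> 0 \<Longrightarrow> a * \<alpha> + b > 0 \<Longrightarrow> a' * \<alpha> + b' > 0 \<Longrightarrow>
      (\<exists>i<k. a * \<alpha> + b \<in> H i \<and> a' * \<alpha> + b' \<in> H i) \<longleftrightarrow> sgn a = sgn a'"
proof -
  obtain c\<^sub>p c\<^sub>n where c: "c\<^sub>p < k" "c\<^sub>n < k" and in_part:
    "\<And>a b. a \<in> \<rat> \<Longrightarrow> b \<in> \<rat> \<Longrightarrow> a \<noteq> 0 \<Longrightarrow> a * \<alpha> + b > 0 \<Longrightarrow>
      a * \<alpha> + b \<in> H (if a > 0 then c\<^sub>p else c\<^sub>n)"
    using linear_in_sign_parts[OF linear_in_P] by blast
  have "{i. i < k \<and> H i \<inter> {x. \<exists>a b. a \<in> \<rat> \<and> b \<in> \<rat> \<and> a \<noteq> 0 \<and> x = a * \<alpha> + b \<and> x > 0} \<noteq> {}}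
      \<subseteq> {c\<^sub>p, c\<^sub>n}"
  proof (rule parts_meeting_subset)
    fix x assume "x \<in> {x. \<exists>a b. a \<in> \<rat> \<and> b \<in> \<rat> \<and> a \<noteq> 0 \<and> x = a * \<alpha> + b \<and> x > 0}"
    then obtain a b where "a \<in> \<rat>" "b \<in> \<rat>" "a \<noteq> 0" "x = a * \<alpha> + b" "x > 0"
      by blast
    then show "\<exists>i\<in>{c\<^sub>p, c\<^sub>n}. x \<in> H i"
      using in_part[of a b] by (cases "a > 0") auto
  qed (use c in auto)
  moreover have "(\<exists>i<k. a * \<alpha> + b \<in> H i \<and> a' * \<alpha> + b' \<in> H i) \<longleftrightarrow> sgn a = sgn a'"
    if "c\<^sub>p \<noteq> c\<^sub>n" "a \<in> \<rat>" "b \<in> \<rat>" "a' \<in> \<rat>" "b' \<in> \<rat>" "a \<noteq> 0" "a' \<noteq> 0"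
      "a * \<alpha> + b > 0" "a' * \<alpha> + b' > 0" for a b a' b'
  proof -
    have "(\<exists>i<k. a * \<alpha> + b \<in> H i \<and> a' * \<alpha> + b' \<in> H i)
        \<longleftrightarrow> (if a > 0 then c\<^sub>p else c\<^sub>n) = (if a' > 0 then c\<^sub>p else c\<^sub>n)"
      by (rule same_part_iff) (use c in_part that in simp_all)
    also have "\<dots> \<longleftrightarrow> sgn a = sgn a'"
      using that(1,6,7) by (cases "a > 0"; cases "a' > 0") (simp_all add: sgn_if)
    finally show ?thesis .
  qed
  ultimately show ?thesis
    by (rule that)
qed

end

theorem corollary3p2:
  fixes \<alpha> :: real and k :: nat and H :: "nat \<Rightarrow> real set"
  assumes transc: "\<not> algebraic \<alpha>"
    and nonempty: "\<And>i. i < k \<Longrightarrow> H i \<noteq> {}"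
    and disjoint: "\<And>i j. i < k \<Longrightarrow> j < k \<Longrightarrow> i \<noteq> j \<Longrightarrow> H i \<inter> H j = {}"
    and cover: "(\<Union>i<k. H i) = {x \<in> Qadj \<alpha>. x > 0}"
    and add_closed: "\<And>i x y. i < k \<Longrightarrow> x \<in> H i \<Longrightarrow> y \<in> H i \<Longrightarrow> x + y \<in> H i"
    and mult_closed: "\<And>i x y. i < k \<Longrightarrow> x \<in> H i \<Longrightarrow> y \<in> H i \<Longrightarrow> x * y \<in> H i"
  defines "L \<equiv> {x. \<exists>a b. a \<in> \<rat> \<and> b \<in> \<rat> \<and> a \<noteq> 0 \<and> x = a * \<alpha> + b \<and> x > 0}"
  shows "card {i. i < k \<and> H i \<inter> L \<noteq> {}} \<le> 2 \<and>
    (card {i. i < k \<and> H i \<inter> L \<noteq> {}} = 2 \<longrightarrow>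
      (\<forall>a b a' b'. a \<in> \<rat> \<and> b \<in> \<rat> \<and> a' \<in> \<rat> \<and> b' \<in> \<rat> \<and> a \<noteq> 0 \<and> a' \<noteq> 0 \<and>
          a * \<alpha> + b > 0 \<and> a' * \<alpha> + b' > 0 \<longrightarrow>
        ((\<exists>i<k. a * \<alpha> + b \<in> H i \<and> a' * \<alpha> + b' \<in> H i) \<longleftrightarrow> sgn a = sgn a')))"
proof -
  interpret semiring_partition H k "{x \<in> Qadj \<alpha>. x > 0}"
    by unfold_locales (use disjoint cover add_closed mult_closed Rats_mult_in_Qadj in auto)
  have positive_linear_in_Qadj: "a * \<alpha> + b \<in> {x \<in> Qadj \<alpha>. x > 0}"
    if "a \<in> \<rat>" "b \<in> \<rat>" "a * \<alpha> + b > 0" for a b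
    using linear_in_Qadj that by simp
  obtain c\<^sub>p c\<^sub>n where parts: "{i. i < k \<and> H i \<inter> L \<noteq> {}} \<subseteq> {c\<^sub>p, c\<^sub>n}"
    and sign_iff: "\<And>a b a' b'. c\<^sub>p \<noteq> c\<^sub>n \<Longrightarrow> a \<in> \<rat> \<Longrightarrow> b \<in> \<rat> \<Longrightarrow> a' \<in> \<rat> \<Longrightarrow> b' \<in> \<rat> \<Longrightarrow>
      a \<noteq> 0 \<Longrightarrow> a' \<noteq> 0 \<Longrightarrow> a * \<alpha> + b > 0 \<Longrightarrow> a' * \<alpha> + b' > 0 \<Longrightarrow>
      (\<exists>i<k. a * \<alpha> + b \<in> H i \<and> a' * \<alpha> + b' \<in> H i) \<longleftrightarrow> sgn a = sgn a'"
    by (rule parts_meeting_linear, erule (2) positive_linear_in_Qadj, rule that[unfolded L_def])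
  have card_le: "card {i. i < k \<and> H i \<inter> L \<noteq> {}} \<le> card {c\<^sub>p, c\<^sub>n}"
    using parts by (rule card_mono[rotated]) simp
  moreover have "card {c\<^sub>p, c\<^sub>n} \<le> 2"
    by (simp add: card_insert_if)
  moreover have "c\<^sub>p \<noteq> c\<^sub>n" if "card {i. i < k \<and> H i \<inter> L \<noteq> {}} = 2"
    using card_le that by auto
  ultimately show ?thesis
    using sign_iff by (intro conjI impI allI; (elim conjE)?) simp_all
qed

end
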